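(* Let $A_2\in\mathbf{C}^{n\times n}$, let $C_2\in\mathbf{C}^{p\times n}$ be any matrix such that the discrete-time antilinear system $x(t+1)=A_2^{\#}x(t)^{\#}$, $y(t)=C_2^{\#}x(t)^{\#}$ is observable, and let $C_N\in\mathbf{C}^{q\times n}$ be such that the pair $(A_2^{\#}A_2,C_N)$ is observable. Then the following are equivalent: (1) the antilinear system $x(t+1)=A_2^{\#}x(t)^{\#}$, $t\in\mathbf{Z}^+$, is asymptotically stable; (2) there exists a unique positive definite matrix $P_1\in\mathbf{C}^{n\times n}$ such that $A_2^{\mathrm H}P_1^{\#}A_2-P_1=-C_2^{\mathrm H}C_2$; (3) there exists a unique positive definite matrix $P_N\in\mathbf{C}^{n\times n}$ such that $(A_2^{\#}A_2)^{\mathrm H}P_N(A_2^{\#}A_2)-P_N=-C_N^{\mathrm H}C_N$. Moreover, if the system is asymptotically stable, then $(C_2,P_1)$ satisfies $A_2^{\mathrm H}P_1^{\#}A_2-P_1=-C_2^{\mathrm H}C_2$ if and only if $(C_N,P_N)=\left(\begin{bmatrix}C_2\\ C_2^{\#}A_2\end{bmatrix},P_1\right)$ satisfies $(A_2^{\#}A_2)^{\mathrm H}P_N(A_2^{\#}A_2)-P_N=-C_N^{\mathrm H}C_N$.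
   Context: $P^{\#}$, $P^{\mathrm H}$: entrywise conjugate, conjugate transpose. A positive definite matrix means a Hermitian positive definite matrix. Observability of the antilinear system means observability of its real representation $\vec x(t+1)=\{0,A_2\}_\circ\vec x(t)$, $\vec y=\{0,C_2\}_\circ\vec x$, where for matrices $A_1,A_2$ of equal size $\{A_1,A_2\}_\circ=\begin{bmatrix}\mathrm{Re}(A_1+A_2) & -\mathrm{Im}(A_1+A_2)\\ \mathrm{Im}(A_1-A_2) & \mathrm{Re}(A_1-A_2)\end{bmatrix}$ and $\vec z=[\mathrm{Re}(z)^{\mathrm T},\mathrm{Im}(z)^{\mathrm T}]^{\mathrm T}$. Asymptotic stability is in the Lyapunov sense (stable and all solutions tend to $0$). *)

theory Defs
  imports "HOL-Analysis.Analysis"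
begin

definition mconj :: "complex^'n^'m \<Rightarrow> complex^'n^'m" where
  "mconj A = (\<chi> i j. cnj (A $ i $ j))"

definition vconj :: "complex^'n \<Rightarrow> complex^'n" where
  "vconj x = (\<chi> i. cnj (x $ i))"

definition mH :: "complex^'n^'m \<Rightarrow> complex^'m^'n" where
  "mH A = transpose (mconj A)"

definition posdef :: "complex^'n^'n \<Rightarrow> bool" where
  "posdef P \<longleftrightarrow> mH P = P \<and>
     (\<forall>x. x \<noteq> 0 \<longrightarrow> 0 < Re (\<Sum>i\<in>UNIV. cnj (x $ i) * (P *v x) $ i))"

definition circ_rep :: "complex^'n^'m \<Rightarrow> complex^'n^'m \<Rightarrow> real^('n + 'n)^('m + 'm)" where
  "circ_rep A1 A2 = (\<chi> i j. (case i of
       Inl a \<Rightarrow> (case j of Inl b \<Rightarrow> Re ((A1 + A2) $ a $ b) | Inr b \<Rightarrow> - Im ((A1 + A2) $ a $ b))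
     | Inr a \<Rightarrow> (case j of Inl b \<Rightarrow> Im ((A1 - A2) $ a $ b) | Inr b \<Rightarrow> Re ((A1 - A2) $ a $ b))))"

definition observable :: "'a::semiring_1^'k^'k \<Rightarrow> 'a^'k^'m \<Rightarrow> bool" where
  "observable F H \<longleftrightarrow> (\<forall>x. (\<forall>t. H *v (((\<lambda>v. F *v v) ^^ t) x) = 0) \<longrightarrow> x = 0)"

definition antilinear_observable :: "complex^'n^'n \<Rightarrow> complex^'n^'p \<Rightarrow> bool" where
  "antilinear_observable A2 C2 \<longleftrightarrow> observable (circ_rep 0 A2) (circ_rep 0 C2)"

definition asymptotically_stable :: "('a::real_normed_vector \<Rightarrow> 'a) \<Rightarrow> bool" where
  "asymptotically_stable f \<longleftrightarrow>
     (\<forall>e>0. \<exists>d>0. \<forall>x0. norm x0 < d \<longrightarrow> (\<forall>t. norm ((f ^^ t) x0) < e)) \<and>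
     (\<forall>x0. (\<lambda>t. (f ^^ t) x0) \<longlonglongrightarrow> 0)"

definition antilin_map :: "complex^'n^'n \<Rightarrow> complex^'n \<Rightarrow> complex^'n" where
  "antilin_map A2 x = mconj A2 *v vconj x"

definition vstack :: "'a^'n^'p \<Rightarrow> 'a^'n^'r \<Rightarrow> 'a^'n^('p + 'r)" where
  "vstack C D = (\<chi> i. case i of Inl k \<Rightarrow> C $ k | Inr k \<Rightarrow> D $ k)"

end

theory Submission
  imports Defs
begin

text \<open>Applying x \<mapsto> A# x# twice gives the linear map x \<mapsto> A# A x, so the antilinear
  system is asymptotically stable iff all powers of M = A# A drive every state to 0.
  For such M and an observable output matrix H the classical discrete Lyapunov theorem holds:
  the unique positive definite solution of M^H P M - P = -H^H H is
  \<Sum>t (M^t)^H H^H H M^t, and conversely a positive definite solution makes x^H P x a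
  Lyapunov function, which by observability has no invariant level set other than 0
  (LaSalle's argument).

  Applying the map X \<mapsto> A^H X# A twice to the antilinear Lyapunov equation
  A^H P# A - P = -C^H C yields the linear Lyapunov equation for M with output [C; C# A];
  conversely, for stable M the defect R of the antilinear equation satisfies M^H R M = R
  and hence vanishes. Observability of the antilinear pair gives observability of
  (M, [C; C# A]), because the outputs of the antilinear system at even and odd times are
  exactly the two blocks.\<close>

section \<open>Conjugation and adjoints\<close>

lemma mconj_mult: "mconj (A ** B) = mconj A ** mconj (B :: complex^_^_)"
  by (simp add: mconj_def matrix_matrix_mult_def vec_eq_iff)

lemma mconj_mconj [simp]: "mconj (mconj A) = A"
  by (simp add: mconj_def vec_eq_iff)

lemma mconj_zero [simp]: "mconj 0 = 0"
  by (simp add: mconj_def vec_eq_iff)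

lemma mconj_add: "mconj (A + B) = mconj A + mconj B"
  by (simp add: mconj_def vec_eq_iff)

lemma mconj_diff: "mconj (A - B) = mconj A - mconj B"
  by (simp add: mconj_def vec_eq_iff)

lemma mH_mult: "mH (A ** B) = mH B ** mH (A :: complex^_^_)"
  by (simp add: mH_def mconj_def transpose_def matrix_matrix_mult_def vec_eq_iff mult.commute)

lemma mH_mH [simp]: "mH (mH A) = A"
  by (simp add: mH_def mconj_def transpose_def vec_eq_iff)

lemma mconj_mH: "mconj (mH A) = mH (mconj A)"
  by (simp add: mH_def mconj_def transpose_def vec_eq_iff)

lemma mH_mat_1 [simp]: "mH (mat 1 :: complex^'n^'n) = mat 1"
  by (simp add: mH_def mconj_def transpose_def mat_def vec_eq_iff)

lemma vconj_mult: "vconj (A *v x) = mconj A *v vconj x"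
  by (simp add: mconj_def vconj_def matrix_vector_mult_def vec_eq_iff)

lemma vconj_vconj [simp]: "vconj (vconj x) = x"
  by (simp add: vconj_def vec_eq_iff)

lemma vconj_zero [simp]: "vconj 0 = 0"
  by (simp add: vconj_def vec_eq_iff)

lemma norm_vconj [simp]: "norm (vconj x) = norm x"
  by (simp add: norm_vec_def vconj_def)

lemma matrix_add_rdistrib: "((B :: 'a::ring_1^_^_) + C) ** A = B ** A + C ** A"
  by (vector matrix_matrix_mult_def sum.distrib[symmetric] field_simps)

lemma matrix_diff_ldistrib: "(A :: 'a::ring_1^_^_) ** (B - C) = A ** B - A ** C"
  by (vector matrix_matrix_mult_def sum_subtractf[symmetric] field_simps)

lemma matrix_diff_rdistrib: "((B :: 'a::ring_1^_^_) - C) ** A = B ** A - C ** A"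
  by (vector matrix_matrix_mult_def sum_subtractf[symmetric] field_simps)

lemma sum_UNIV_Plus:
  "(\<Sum>k\<in>(UNIV :: ('a::finite + 'b::finite) set). f k) =
    (\<Sum>a\<in>UNIV. f (Inl a)) + (\<Sum>b\<in>UNIV. f (Inr b))"
  using sum.Plus[of "UNIV :: 'a set" "UNIV :: 'b set" f] by (simp add: comp_def)

lemma vstack_gram: "mH (vstack C D) ** vstack C D = mH C ** C + mH D ** (D :: complex^_^_)"
  by (simp add: mH_def mconj_def transpose_def vstack_def matrix_matrix_mult_def vec_eq_iff sum_UNIV_Plus)

lemma vstack_mult_vec_eq_0_iff:
  "vstack C D *v x = 0 \<longleftrightarrow> C *v x = 0 \<and> D *v (x :: 'a::semiring_1^_) = 0"
  by (auto simp: vstack_def matrix_vector_mult_def vec_eq_iff split: sum.splits)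

section \<open>Matrix powers and their decay\<close>

primrec mpow :: "'a::semiring_1^'n^'n \<Rightarrow> nat \<Rightarrow> 'a^'n^'n" where
  "mpow M 0 = mat 1"
| "mpow M (Suc t) = M ** mpow M t"

lemma mpow_add: "mpow M (s + t) = mpow M s ** mpow M t"
  by (induction s) (simp_all add: matrix_mul_assoc)

lemma mpow_Suc_right: "mpow M (Suc t) = mpow M t ** M"
  using mpow_add[of M t 1] by simp

lemma funpow_mult_vec: "((\<lambda>v. M *v v) ^^ t) x = mpow M t *v x"
  by (induction t) (simp_all add: matrix_vector_mul_assoc)

definition l1_norm :: "complex^'n^'m \<Rightarrow> real" where
  "l1_norm A = (\<Sum>i\<in>UNIV. \<Sum>j\<in>UNIV. cmod (A $ i $ j))"

lemma l1_norm_nonneg: "0 \<le> l1_norm A"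
  by (simp add: l1_norm_def sum_nonneg)

lemma l1_norm_mconj [simp]: "l1_norm (mconj A) = l1_norm A"
  by (simp add: l1_norm_def mconj_def)

lemma l1_norm_mH [simp]: "l1_norm (mH A) = l1_norm A"
  unfolding l1_norm_def mH_def mconj_def transpose_def by simp (rule sum.swap)

lemma row_sum_le_l1_norm: "(\<Sum>j\<in>UNIV. cmod (A $ i $ j)) \<le> l1_norm A"
  unfolding l1_norm_def
  by (rule member_le_sum[where f = "\<lambda>i. \<Sum>j\<in>UNIV. cmod (A $ i $ j)"]) (auto intro: sum_nonneg)

lemma norm_entry_le_l1_norm: "cmod (A $ i $ j) \<le> l1_norm A"
  by (rule order.trans[OF member_le_sum row_sum_le_l1_norm]) auto

lemma l1_norm_mult: "l1_norm (A ** B) \<le> l1_norm A * l1_norm (B :: complex^_^_)"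
proof -
  have "l1_norm (A ** B) \<le>
      (\<Sum>i\<in>UNIV. \<Sum>j\<in>UNIV. \<Sum>k\<in>UNIV. cmod (A $ i $ k) * cmod (B $ k $ j))"
    unfolding l1_norm_def matrix_matrix_mult_def
    by (auto intro!: sum_mono order.trans[OF norm_sum] simp: norm_mult)
  also have "\<dots> = (\<Sum>i\<in>UNIV. \<Sum>k\<in>UNIV. cmod (A $ i $ k) * (\<Sum>j\<in>UNIV. cmod (B $ k $ j)))"
    unfolding sum_distrib_left by (rule sum.cong[OF refl], rule sum.swap)
  also have "\<dots> \<le> (\<Sum>i\<in>UNIV. \<Sum>k\<in>UNIV. cmod (A $ i $ k) * l1_norm B)"
    by (intro sum_mono mult_left_mono row_sum_le_l1_norm) auto
  also have "\<dots> = l1_norm A * l1_norm B"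
    by (simp add: l1_norm_def sum_distrib_right)
  finally show ?thesis .
qed

lemma norm_mult_vec_le: "norm (A *v x) \<le> l1_norm A * norm (x :: complex^_)"
proof -
  have "norm (A *v x) \<le> (\<Sum>i\<in>UNIV. cmod ((A *v x) $ i))"
    by (simp add: norm_vec_def L2_set_le_sum)
  also have "\<dots> \<le> (\<Sum>i\<in>UNIV. \<Sum>j\<in>UNIV. cmod (A $ i $ j) * norm x)"
    unfolding matrix_vector_mult_def
    by (auto intro!: sum_mono order.trans[OF norm_sum] mult_left_mono
        Finite_Cartesian_Product.norm_nth_le simp: norm_mult)
  also have "\<dots> = l1_norm A * norm x"
    by (simp add: l1_norm_def sum_distrib_right)
  finally show ?thesis .
qed

lemma norm_congruence_entry_le:
  "cmod ((mH B ** D ** B) $ i $ j) \<le> l1_norm D * l1_norm B ^ 2"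
proof -
  have "cmod ((mH B ** D ** B) $ i $ j) \<le> l1_norm (mH B ** D) * l1_norm B"
    by (rule order.trans[OF norm_entry_le_l1_norm l1_norm_mult])
  also have "\<dots> \<le> (l1_norm B * l1_norm D) * l1_norm B"
    by (intro mult_right_mono l1_norm_nonneg order.trans[OF l1_norm_mult]) simp
  finally show ?thesis by (simp add: power2_eq_square mult_ac)
qed

definition schur_stable :: "complex^'n^'n \<Rightarrow> bool" where
  "schur_stable M \<longleftrightarrow> (\<forall>x. (\<lambda>t. mpow M t *v x) \<longlonglongrightarrow> 0)"

lemma schur_stable_l1_norm_tendsto_0:
  assumes "schur_stable M"
  shows "(\<lambda>t. l1_norm (mpow M t)) \<longlonglongrightarrow> 0"
proof -
  have "(\<lambda>t. cmod (mpow M t $ i $ j)) \<longlonglongrightarrow> 0" for i j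
  proof -
    have "mpow M t $ i $ j = (mpow M t *v axis j 1) $ i" for t
      by (simp add: matrix_vector_mult_def axis_def if_distrib cong: if_cong)
    moreover have "(\<lambda>t. (mpow M t *v axis j 1) $ i) \<longlonglongrightarrow> 0 $ i"
      using assms unfolding schur_stable_def by (intro tendsto_vec_nth) auto
    ultimately show ?thesis by (simp add: tendsto_norm_zero)
  qed
  then show ?thesis
    unfolding l1_norm_def by (intro tendsto_null_sum)
qed

lemma submultiplicative_geometric_decay:
  fixes a :: "nat \<Rightarrow> real"
  assumes nonneg: "\<And>t. 0 \<le> a t" and submult: "\<And>s t. a (s + t) \<le> a s * a t"
    and lim: "a \<longlonglongrightarrow> 0"
  shows "\<exists>K r. 0 \<le> K \<and> 0 < r \<and> r < 1 \<and> (\<forall>t. a t \<le> K * r ^ t)"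
proof -
  obtain N where N: "\<forall>n\<ge>N. norm (a n - 0) < 1/2"
    using LIMSEQ_D[OF lim, of "1/2"] by auto
  define k where "k = Suc N"
  have ak: "a k < 1/2" and "k \<noteq> 0"
    using N[rule_format, of k] nonneg[of k] by (simp_all add: k_def)
  define r :: real where "r = root k (1/2)"
  have r: "0 < r" "r < 1" "r ^ k = 1/2"
    using \<open>k \<noteq> 0\<close> by (auto simp: r_def)
  define K where "K = (\<Sum>s\<le>k. a s) / r ^ k"
  have K0: "0 \<le> K"
    using r by (simp add: K_def sum_nonneg nonneg)
  have "a t \<le> K * r ^ t" for t
  proof (induction t rule: less_induct)
    case (less t)
    show ?case
    proof (cases "t < k")
      case True
      have "a t \<le> (\<Sum>s\<le>k. a s)"
        using True nonneg by (intro member_le_sum) auto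
      also have "\<dots> = K * r ^ k"
        using r by (simp add: K_def)
      also have "\<dots> \<le> K * r ^ t"
        using True r K0 by (intro mult_left_mono power_decreasing) auto
      finally show ?thesis .
    next
      case False
      then obtain d where t: "t = k + d"
        using le_Suc_ex not_less by blast
      have "a t \<le> a k * a d"
        unfolding t by (rule submult)
      also have "\<dots> \<le> (1/2) * (K * r ^ d)"
        using less.IH[of d] t \<open>k \<noteq> 0\<close> ak nonneg[of d] by (intro mult_mono) auto
      also have "\<dots> = K * r ^ t"
        by (simp add: t power_add r(3))
      finally show ?thesis .
    qed
  qed
  then show ?thesis
    using K0 r by blast
qed

lemma schur_stable_geometric_decay:
  assumes "schur_stable M"
  shows "\<exists>K r. 0 \<le> K \<and> 0 < r \<and> r < 1 \<and> (\<forall>t. l1_norm (mpow M t) \<le> K * r ^ t)"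
  by (rule submultiplicative_geometric_decay)
    (simp_all add: l1_norm_nonneg mpow_add l1_norm_mult schur_stable_l1_norm_tendsto_0[OF assms])

lemma schur_stable_congruence_fixpoint:
  assumes "schur_stable M" and fixpoint: "mH M ** D ** M = D"
  shows "D = 0"
proof -
  have invariant: "mH (mpow M t) ** D ** mpow M t = D" for t
  proof (induction t)
    case (Suc t)
    have "mH (mpow M (Suc t)) ** D ** mpow M (Suc t) = mH (mpow M t) ** (mH M ** D ** M) ** mpow M t"
      by (simp add: mH_mult matrix_mul_assoc)
    then show ?case
      using Suc fixpoint by simp
  qed simp
  have "D $ i $ j = 0" for i j
  proof -
    have "cmod (D $ i $ j) \<le> l1_norm D * l1_norm (mpow M t) ^ 2" for t
      using norm_congruence_entry_le[of "mpow M t" D i j] by (simp add: invariant)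
    moreover have "(\<lambda>t. l1_norm D * l1_norm (mpow M t) ^ 2) \<longlonglongrightarrow> l1_norm D * 0 ^ 2"
      by (intro tendsto_intros schur_stable_l1_norm_tendsto_0 assms(1))
    ultimately have "cmod (D $ i $ j) \<le> 0"
      by (intro LIMSEQ_le_const) auto
    then show ?thesis by simp
  qed
  then show ?thesis by (simp add: vec_eq_iff)
qed

section \<open>Hermitian forms\<close>

definition herm_inner :: "complex^'n \<Rightarrow> complex^'n \<Rightarrow> complex" where
  "herm_inner u v = (\<Sum>i\<in>UNIV. cnj (u $ i) * v $ i)"

definition quad_form :: "complex^'n^'n \<Rightarrow> complex^'n \<Rightarrow> complex" where
  "quad_form P x = herm_inner x (P *v x)"

lemma herm_inner_adjoint: "herm_inner u (B *v v) = herm_inner (mH B *v u) v"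
proof -
  have "herm_inner u (B *v v) = (\<Sum>i\<in>UNIV. \<Sum>j\<in>UNIV. cnj (u $ i) * (B $ i $ j * v $ j))"
    by (simp add: herm_inner_def matrix_vector_mult_def sum_distrib_left)
  also have "\<dots> = (\<Sum>j\<in>UNIV. \<Sum>i\<in>UNIV. cnj (u $ i) * (B $ i $ j * v $ j))"
    by (rule sum.swap)
  also have "\<dots> = herm_inner (mH B *v u) v"
    by (simp add: herm_inner_def matrix_vector_mult_def mH_def mconj_def transpose_def
        sum_distrib_left sum_distrib_right mult_ac)
  finally show ?thesis .
qed

lemma herm_inner_self: "herm_inner u u = of_real (norm u ^ 2)"
proof -
  have "norm u ^ 2 = (\<Sum>i\<in>UNIV. cmod (u $ i) ^ 2)"
    by (simp add: norm_vec_def L2_set_def sum_nonneg)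
  then have "of_real (norm u ^ 2) = (\<Sum>i\<in>UNIV. of_real (cmod (u $ i) ^ 2) :: complex)"
    by simp
  also have "\<dots> = herm_inner u u"
    unfolding herm_inner_def by (rule sum.cong[OF refl], subst complex_norm_square, rule mult.commute)
  finally show ?thesis ..
qed

lemma posdef_iff_quad_form:
  "posdef P \<longleftrightarrow> mH P = P \<and> (\<forall>x. x \<noteq> 0 \<longrightarrow> 0 < Re (quad_form P x))"
  by (simp add: posdef_def quad_form_def herm_inner_def)

lemma quad_form_expand: "quad_form P x = (\<Sum>i\<in>UNIV. cnj (x $ i) * (\<Sum>j\<in>UNIV. P $ i $ j * x $ j))"
  by (simp add: quad_form_def herm_inner_def matrix_vector_mult_def)

lemma quad_form_zero [simp]: "quad_form P 0 = 0"
  by (simp add: quad_form_expand)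

lemma quad_form_congruence: "quad_form (mH B ** P ** B) x = quad_form P (B *v x)"
  by (simp add: quad_form_def matrix_vector_mul_assoc[symmetric] herm_inner_adjoint)

lemma quad_form_gram: "quad_form (mH H ** H) x = of_real (norm (H *v x) ^ 2)"
  using herm_inner_adjoint[of x "mH H" "H *v x"]
  by (simp add: quad_form_def matrix_vector_mul_assoc[symmetric] herm_inner_self)

lemma quad_form_diff: "quad_form (P - Q) x = quad_form P x - quad_form Q x"
  by (simp add: quad_form_def herm_inner_def matrix_vector_mult_diff_rdistrib
      sum_subtractf[symmetric] algebra_simps)

lemma quad_form_scaleR: "quad_form P (a *\<^sub>R x) = of_real (a ^ 2) * quad_form P x"
  unfolding quad_form_expand vector_scaleR_component unfolding scaleR_conv_of_real
  by (simp add: sum_distrib_left power2_eq_square mult_ac)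

lemma continuous_on_quad_form: "continuous_on UNIV (\<lambda>x. Re (quad_form P x))"
  unfolding quad_form_expand by (intro continuous_intros)

lemma posdef_quad_form_nonneg: "posdef P \<Longrightarrow> 0 \<le> Re (quad_form P x)"
  by (cases "x = 0") (auto simp: posdef_iff_quad_form less_imp_le)

lemma posdef_quad_form_lower_bound:
  fixes P :: "complex^'n^'n"
  assumes "posdef P"
  shows "\<exists>c>0. \<forall>x. c * norm x ^ 2 \<le> Re (quad_form P x)"
proof -
  have pos: "x \<noteq> 0 \<Longrightarrow> 0 < Re (quad_form P x)" for x
    using assms by (simp add: posdef_iff_quad_form)
  obtain e :: "complex^'n" where "norm e = 1"
    using vector_choose_size[of 1] by auto
  then have "sphere (0 :: complex^'n) 1 \<noteq> {}" by auto
  then obtain x0 where x0: "x0 \<in> sphere 0 1"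
    and min: "\<forall>z\<in>sphere 0 1. Re (quad_form P x0) \<le> Re (quad_form P z)"
    using continuous_attains_inf[OF compact_sphere _ continuous_on_subset[OF continuous_on_quad_form]]
    by blast
  have "Re (quad_form P x0) * norm x ^ 2 \<le> Re (quad_form P x)" for x
  proof (cases "x = 0")
    case False
    define z where "z = (1 / norm x) *\<^sub>R x"
    have "z \<in> sphere 0 1" and x: "x = norm x *\<^sub>R z"
      using False by (simp_all add: z_def)
    then have "Re (quad_form P x0) * norm x ^ 2 \<le> Re (quad_form P z) * norm x ^ 2"
      using min by (intro mult_right_mono) auto
    also have "\<dots> = Re (quad_form P x)"
      by (subst (2) x) (simp add: quad_form_scaleR)
    finally show ?thesis .
  qed simp
  moreover have "0 < Re (quad_form P x0)"
    using x0 by (intro pos) auto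
  ultimately show ?thesis by blast
qed

section \<open>The discrete Lyapunov theorem\<close>

definition congr_pow :: "complex^'n^'n \<Rightarrow> complex^'n^'n \<Rightarrow> nat \<Rightarrow> complex^'n^'n" where
  "congr_pow M Q t = mH (mpow M t) ** Q ** mpow M t"

definition lyap_sum :: "complex^'n^'n \<Rightarrow> complex^'n^'n \<Rightarrow> complex^'n^'n" where
  "lyap_sum M Q = (\<chi> i j. \<Sum>t. congr_pow M Q t $ i $ j)"

lemma congr_pow_Suc: "congr_pow M Q (Suc t) = mH M ** congr_pow M Q t ** M"
  by (simp add: congr_pow_def mpow_Suc_right mH_mult matrix_mul_assoc del: mpow.simps)

lemma congr_pow_sums:
  assumes "schur_stable M"
  shows "(\<lambda>t. congr_pow M Q t $ i $ j) sums (lyap_sum M Q $ i $ j)"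
proof -
  obtain K r where K: "0 \<le> K" "0 < r" "r < 1" "\<And>t. l1_norm (mpow M t) \<le> K * r ^ t"
    using schur_stable_geometric_decay[OF assms] by blast
  have "norm (congr_pow M Q t $ i $ j) \<le> (l1_norm Q * K ^ 2) * (r ^ 2) ^ t" for t
  proof -
    have "norm (congr_pow M Q t $ i $ j) \<le> l1_norm Q * l1_norm (mpow M t) ^ 2"
      unfolding congr_pow_def by (rule norm_congruence_entry_le)
    also have "\<dots> \<le> l1_norm Q * (K * r ^ t) ^ 2"
      by (intro mult_left_mono power_mono K(4) l1_norm_nonneg)
    also have "\<dots> = (l1_norm Q * K ^ 2) * (r ^ 2) ^ t"
      by (simp add: power_mult_distrib mult_ac flip: power_mult)
    finally show ?thesis .
  qed
  moreover have "summable (\<lambda>t. (l1_norm Q * K ^ 2) * (r ^ 2) ^ t)"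
    using K by (intro summable_mult summable_geometric) (simp add: power_less_one_iff)
  ultimately have "summable (\<lambda>t. congr_pow M Q t $ i $ j)"
    by (rule summable_comparison_test'[rotated])
  then show ?thesis
    by (simp add: lyap_sum_def summable_sums)
qed

lemma lyap_sum_solves:
  assumes "schur_stable M"
  shows "mH M ** lyap_sum M Q ** M - lyap_sum M Q = - Q"
proof -
  have "(mH M ** lyap_sum M Q ** M) $ i $ j = lyap_sum M Q $ i $ j - Q $ i $ j" for i j
  proof -
    have entry: "(mH M ** X ** M) $ i $ j =
        (\<Sum>k\<in>UNIV. (\<Sum>l\<in>UNIV. mH M $ i $ l * X $ l $ k) * M $ k $ j)" for X
      by (simp add: matrix_matrix_mult_def)
    have "(\<lambda>t. congr_pow M Q (Suc t) $ i $ j) sums ((mH M ** lyap_sum M Q ** M) $ i $ j)"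
      unfolding congr_pow_Suc entry
      by (intro sums_sum sums_mult sums_mult2 congr_pow_sums assms)
    moreover have "(\<lambda>t. congr_pow M Q (Suc t) $ i $ j) sums (lyap_sum M Q $ i $ j - Q $ i $ j)"
      using congr_pow_sums[OF assms, of Q i j] by (subst sums_Suc_iff) (simp add: congr_pow_def)
    ultimately show ?thesis
      by (rule sums_unique2)
  qed
  then show ?thesis by (simp add: vec_eq_iff)
qed

lemma congr_pow_hermitian: "mH Q = Q \<Longrightarrow> mH (congr_pow M Q t) = congr_pow M Q t"
  by (simp add: congr_pow_def mH_mult matrix_mul_assoc)

lemma lyap_sum_hermitian:
  assumes "schur_stable M" and "mH Q = Q"
  shows "mH (lyap_sum M Q) = lyap_sum M Q"
proof -
  have "cnj (lyap_sum M Q $ j $ i) = lyap_sum M Q $ i $ j" for i j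
  proof -
    have "cnj (congr_pow M Q t $ j $ i) = congr_pow M Q t $ i $ j" for t
      using arg_cong[OF congr_pow_hermitian[OF assms(2), of M t], of "\<lambda>X. X $ i $ j"]
      by (simp add: mH_def mconj_def transpose_def)
    then have "(\<lambda>t. congr_pow M Q t $ i $ j) sums cnj (lyap_sum M Q $ j $ i)"
      using sums_cnj[THEN iffD2, OF congr_pow_sums[OF assms(1), of Q j i]] by simp
    then show ?thesis
      using congr_pow_sums[OF assms(1)] by (rule sums_unique2)
  qed
  then show ?thesis
    by (simp add: mH_def mconj_def transpose_def vec_eq_iff)
qed

lemma lyap_sum_posdef:
  assumes st: "schur_stable M" and obs: "observable M H"
  shows "posdef (lyap_sum M (mH H ** H))"
  unfolding posdef_iff_quad_form
proof (intro conjI allI impI)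
  show "mH (lyap_sum M (mH H ** H)) = lyap_sum M (mH H ** H)"
    by (rule lyap_sum_hermitian[OF st]) (simp add: mH_mult)
  fix x :: "complex^'a"
  assume "x \<noteq> 0"
  have "(\<lambda>t. quad_form (congr_pow M (mH H ** H) t) x) sums quad_form (lyap_sum M (mH H ** H)) x"
    unfolding quad_form_expand by (intro sums_sum sums_mult sums_mult2 congr_pow_sums st)
  then have sums: "(\<lambda>t. norm (H *v (mpow M t *v x)) ^ 2) sums Re (quad_form (lyap_sum M (mH H ** H)) x)"
    by (simp add: sums_complex_iff congr_pow_def quad_form_congruence quad_form_gram
        matrix_vector_mul_assoc)
  obtain t where "H *v (mpow M t *v x) \<noteq> 0"
    using obs \<open>x \<noteq> 0\<close> unfolding observable_def funpow_mult_vec by blast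
  then have "0 < (\<Sum>t. norm (H *v (mpow M t *v x)) ^ 2)"
    by (intro suminf_pos2[OF sums_summable[OF sums]]) auto
  then show "0 < Re (quad_form (lyap_sum M (mH H ** H)) x)"
    using sums by (simp add: sums_iff)
qed

lemma lyapunov_solution_unique:
  assumes "schur_stable M" and "mH M ** X ** M - X = - Q" and "mH M ** Y ** M - Y = - Q"
  shows "X = Y"
proof -
  have "mH M ** (X - Y) ** M = (mH M ** X ** M - X) - (mH M ** Y ** M - Y) + (X - Y)"
    by (simp add: matrix_diff_ldistrib matrix_diff_rdistrib)
  also have "\<dots> = X - Y"
    using assms(2,3) by simp
  finally have "X - Y = 0"
    by (rule schur_stable_congruence_fixpoint[OF assms(1)])
  then show ?thesis by simp
qed

lemma lyapunov_decrease:
  assumes "mH M ** P ** M - P = - (mH H ** H)"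
  shows "Re (quad_form P (M *v x)) = Re (quad_form P x) - norm (H *v x) ^ 2"
proof -
  have "mH M ** P ** M = P - mH H ** H"
    using assms by (simp add: diff_eq_eq)
  then have "quad_form P (M *v x) = quad_form P x - of_real (norm (H *v x) ^ 2)"
    by (simp add: quad_form_congruence[symmetric] quad_form_diff quad_form_gram)
  then show ?thesis by simp
qed

text \<open>LaSalle's argument: the Lyapunov values along the trajectory decrease to some L, and
  at a limit point z of the bounded trajectory the value L is attained along the whole
  trajectory of z, so the output vanishes there and observability forces z = 0.\<close>

lemma lyapunov_value_tendsto_0:
  fixes M :: "complex^'n^'n"
  assumes pd: "posdef P" and eq: "mH M ** P ** M - P = - (mH H ** H)" and obs: "observable M H"
  shows "(\<lambda>t. Re (quad_form P (mpow M t *v x))) \<longlonglongrightarrow> 0"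
proof -
  define V where "V y = Re (quad_form P y)" for y
  define v where "v t = V (mpow M t *v x)" for t
  have decrease: "V (M *v y) = V y - norm (H *v y) ^ 2" for y
    unfolding V_def by (rule lyapunov_decrease[OF eq])
  have "decseq v"
    unfolding decseq_Suc_iff by (simp add: v_def decrease matrix_vector_mul_assoc[symmetric])
  moreover have "0 \<le> v t" for t
    by (simp add: v_def V_def posdef_quad_form_nonneg[OF pd])
  ultimately obtain L where L: "v \<longlonglongrightarrow> L"
    using decseq_convergent by blast
  obtain c where c: "0 < c" "\<And>y. c * norm y ^ 2 \<le> V y"
    using posdef_quad_form_lower_bound[OF pd] unfolding V_def by blast
  have "norm (mpow M t *v x) \<le> sqrt (v 0 / c)" for t
    using c(2)[of "mpow M t *v x"] \<open>decseq v\<close>[unfolded decseq_def, rule_format, of 0 t] c(1)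
    by (intro real_le_rsqrt) (simp add: v_def field_simps)
  then have "bounded (range (\<lambda>t. mpow M t *v x))"
    unfolding bounded_iff by blast
  then obtain z r where r: "strict_mono r" and lim: "((\<lambda>t. mpow M t *v x) \<circ> r) \<longlonglongrightarrow> z"
    using bounded_imp_convergent_subsequence by blast
  have VL: "V (mpow M j *v z) = L" for j
  proof -
    have "(\<lambda>k. mpow M j *v (mpow M (r k) *v x)) \<longlonglongrightarrow> mpow M j *v z"
      using bounded_linear.tendsto[OF matrix_vector_mul_bounded_linear lim] by (simp add: comp_def)
    then have "(\<lambda>k. V (mpow M j *v (mpow M (r k) *v x))) \<longlonglongrightarrow> V (mpow M j *v z)"
      unfolding V_def
      by (rule continuous_on_tendsto_compose[OF continuous_on_quad_form]) auto
    moreover have "(\<lambda>k. V (mpow M j *v (mpow M (r k) *v x))) = v \<circ> (\<lambda>k. j + r k)"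
      by (auto simp: v_def mpow_add matrix_vector_mul_assoc)
    moreover have "(v \<circ> (\<lambda>k. j + r k)) \<longlonglongrightarrow> L"
      using r by (intro LIMSEQ_subseq_LIMSEQ[OF L]) (simp add: strict_mono_def)
    ultimately show ?thesis
      using LIMSEQ_unique by metis
  qed
  have "H *v (mpow M j *v z) = 0" for j
    using decrease[of "mpow M j *v z"] VL[of j] VL[of "Suc j"] by (simp add: matrix_vector_mul_assoc)
  then have "z = 0"
    using obs unfolding observable_def funpow_mult_vec by blast
  then have "L = 0"
    using VL[of 0] by (simp add: V_def)
  then show ?thesis
    using L unfolding v_def[abs_def] V_def by simp
qed

lemma posdef_lyapunov_imp_schur_stable:
  fixes M :: "complex^'n^'n"
  assumes pd: "posdef P" and eq: "mH M ** P ** M - P = - (mH H ** H)" and obs: "observable M H"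
  shows "schur_stable M"
  unfolding schur_stable_def
proof
  fix x :: "complex^'n"
  obtain c where c: "0 < c" "\<And>y. c * norm y ^ 2 \<le> Re (quad_form P y)"
    using posdef_quad_form_lower_bound[OF pd] by blast
  define w where "w t = sqrt (Re (quad_form P (mpow M t *v x)) / c)" for t
  have "\<forall>t. norm (mpow M t *v x) \<le> w t"
    unfolding w_def using c by (intro allI real_le_rsqrt) (simp add: field_simps)
  moreover have "w \<longlonglongrightarrow> 0"
  proof -
    have "w \<longlonglongrightarrow> sqrt 0"
      unfolding w_def[abs_def]
      by (intro tendsto_real_sqrt tendsto_divide_zero lyapunov_value_tendsto_0[OF pd eq obs])
    then show ?thesis by simp
  qed
  ultimately show "(\<lambda>t. mpow M t *v x) \<longlonglongrightarrow> 0"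
    by (rule Lim_null_comparison[OF always_eventually])
qed

theorem lyapunov_unique_posdef_iff_schur_stable:
  fixes M :: "complex^'n^'n"
  assumes obs: "observable M H"
  shows "(\<exists>!P. posdef P \<and> mH M ** P ** M - P = - (mH H ** H)) \<longleftrightarrow> schur_stable M"
proof
  assume "\<exists>!P. posdef P \<and> mH M ** P ** M - P = - (mH H ** H)"
  then show "schur_stable M"
    using posdef_lyapunov_imp_schur_stable obs by blast
next
  assume st: "schur_stable M"
  show "\<exists>!P. posdef P \<and> mH M ** P ** M - P = - (mH H ** H)"
  proof (rule ex1I[of _ "lyap_sum M (mH H ** H)"])
    show "posdef (lyap_sum M (mH H ** H)) \<and>
        mH M ** lyap_sum M (mH H ** H) ** M - lyap_sum M (mH H ** H) = - (mH H ** H)"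
      using lyap_sum_posdef[OF st obs] lyap_sum_solves[OF st] by blast
  qed (use lyapunov_solution_unique[OF st _ lyap_sum_solves[OF st]] in blast)
qed

section \<open>The antilinear system\<close>

lemma vconj_antilin_map: "vconj (antilin_map A x) = A *v x"
  by (simp add: antilin_map_def vconj_mult)

lemma norm_antilin_map_le: "norm (antilin_map A x) \<le> l1_norm A * norm x"
  using norm_mult_vec_le[of "mconj A" "vconj x"] by (simp add: antilin_map_def)

lemma antilin_map_twice: "antilin_map A (antilin_map A x) = (mconj A ** A) *v x"
  by (simp add: antilin_map_def vconj_mult matrix_vector_mul_assoc)

lemma funpow_antilin_map_even: "(antilin_map A ^^ (2 * t)) x = mpow (mconj A ** A) t *v x"
proof (induction t)
  case (Suc t)
  have "(antilin_map A ^^ (2 * Suc t)) x = antilin_map A (antilin_map A ((antilin_map A ^^ (2 * t)) x))"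
    by (simp add: numeral_2_eq_2)
  then show ?case
    by (simp add: Suc antilin_map_twice matrix_vector_mul_assoc)
qed simp

lemma funpow_antilin_map_div2:
  "(antilin_map A ^^ t) x =
    (if even t then mpow (mconj A ** A) (t div 2) *v x
     else antilin_map A (mpow (mconj A ** A) (t div 2) *v x))"
proof (cases "even t")
  case True
  then show ?thesis
    using funpow_antilin_map_even[where t = "t div 2"] by simp
next
  case False
  then have "t = Suc (2 * (t div 2))"
    by (simp add: odd_two_times_div_two_succ)
  then show ?thesis
    using False funpow_antilin_map_even[where t = "t div 2"] by (metis funpow.simps(2) o_apply)
qed

lemma asymptotically_stable_if_uniform_decay:
  fixes f :: "'a::real_normed_vector \<Rightarrow> 'a"
  assumes bound: "\<And>t x. norm ((f ^^ t) x) \<le> c t * norm x" and lim: "c \<longlonglongrightarrow> 0"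
  shows "asymptotically_stable f"
proof -
  obtain B where B: "0 < B" "\<And>t. norm (c t) \<le> B"
    using BseqE[OF convergent_imp_Bseq[OF convergentI[OF lim]]] by blast
  have "norm ((f ^^ t) x) \<le> B * norm x" for t x
    using bound[of t x] mult_right_mono[OF abs_le_D1[OF B(2)[of t, unfolded real_norm_def]] norm_ge_zero[of x]]
    by linarith
  then have "\<exists>d>0. \<forall>x. norm x < d \<longrightarrow> (\<forall>t. norm ((f ^^ t) x) < e)" if "0 < e" for e
    using B(1) that by (intro exI[of _ "e / B"]) (auto intro: order.strict_trans1 simp: field_simps)
  moreover have "(\<lambda>t. (f ^^ t) x) \<longlonglongrightarrow> 0" for x
    by (rule Lim_null_comparison[OF always_eventually tendsto_mult_left_zero[OF lim]]) (use bound in blast)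
  ultimately show ?thesis
    unfolding asymptotically_stable_def by blast
qed

lemma asymptotically_stable_antilin_map_iff:
  "asymptotically_stable (antilin_map A) \<longleftrightarrow> schur_stable (mconj A ** A)"
proof
  assume "asymptotically_stable (antilin_map A)"
  then have "((\<lambda>t. (antilin_map A ^^ t) x) \<circ> (\<lambda>t. 2 * t)) \<longlonglongrightarrow> 0" for x
    unfolding asymptotically_stable_def by (intro LIMSEQ_subseq_LIMSEQ) (auto simp: strict_mono_def)
  then show "schur_stable (mconj A ** A)"
    by (simp add: schur_stable_def comp_def funpow_antilin_map_even)
next
  let ?M = "mconj A ** A"
  assume st: "schur_stable ?M"
  show "asymptotically_stable (antilin_map A)"
  proof (rule asymptotically_stable_if_uniform_decay)
    fix t x
    let ?y = "mpow ?M (t div 2) *v x"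
    have "norm ((antilin_map A ^^ t) x) \<le> (1 + l1_norm A) * norm ?y"
      using norm_antilin_map_le[of A ?y] mult_nonneg_nonneg[OF l1_norm_nonneg norm_ge_zero, of A ?y]
      by (cases "even t") (simp_all add: funpow_antilin_map_div2 algebra_simps add_increasing)
    also have "\<dots> \<le> (1 + l1_norm A) * (l1_norm (mpow ?M (t div 2)) * norm x)"
      using l1_norm_nonneg[of A] by (intro mult_left_mono norm_mult_vec_le) auto
    finally show "norm ((antilin_map A ^^ t) x) \<le> (1 + l1_norm A) * l1_norm (mpow ?M (t div 2)) * norm x"
      by (simp add: mult.assoc)
  next
    have "(\<lambda>t. l1_norm (mpow ?M (t div 2))) \<longlonglongrightarrow> 0"
      by (rule filterlim_compose[OF schur_stable_l1_norm_tendsto_0[OF st] filterlim_at_top_div_const_nat]) simp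
    then show "(\<lambda>t. (1 + l1_norm A) * l1_norm (mpow ?M (t div 2))) \<longlonglongrightarrow> 0"
      by (rule tendsto_mult_right_zero)
  qed
qed

definition re_im_vec :: "complex^'n \<Rightarrow> real^('n + 'n)" where
  "re_im_vec z = (\<chi> i. case i of Inl a \<Rightarrow> Re (z $ a) | Inr a \<Rightarrow> Im (z $ a))"

lemma circ_rep_mult_re_im_vec: "circ_rep 0 B *v re_im_vec z = re_im_vec (mconj B *v vconj z)"
proof (subst vec_eq_iff, intro allI)
  fix i
  show "(circ_rep 0 B *v re_im_vec z) $ i = re_im_vec (mconj B *v vconj z) $ i"
    by (cases i) (simp_all add: circ_rep_def re_im_vec_def matrix_vector_mult_def sum_UNIV_Plus
        mconj_def vconj_def Re_sum Im_sum sum.distrib[symmetric] sum_negf[symmetric]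
        sum_subtractf[symmetric] algebra_simps)
qed

lemma re_im_vec_eq_0_iff [simp]: "re_im_vec z = 0 \<longleftrightarrow> z = 0"
proof
  assume "re_im_vec z = 0"
  then have "re_im_vec z $ Inl a = 0" "re_im_vec z $ Inr a = 0" for a
    by simp_all
  then show "z = 0"
    by (simp add: re_im_vec_def vec_eq_iff complex_eq_iff)
qed (simp add: re_im_vec_def vec_eq_iff split: sum.splits)

lemma funpow_circ_rep:
  "((\<lambda>v. circ_rep 0 A *v v) ^^ t) (re_im_vec z) = re_im_vec ((antilin_map A ^^ t) z)"
  by (induction t) (simp_all add: circ_rep_mult_re_im_vec antilin_map_def)

lemma antilinear_observable_imp_observable_square:
  assumes "antilinear_observable A C"
  shows "observable (mconj A ** A) (vstack C (mconj C ** A))"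
  unfolding observable_def funpow_mult_vec
proof (intro allI impI)
  fix x
  assume out: "\<forall>t. vstack C (mconj C ** A) *v (mpow (mconj A ** A) t *v x) = 0"
  have "mconj C *v vconj ((antilin_map A ^^ t) x) = 0" for t
  proof -
    let ?y = "mpow (mconj A ** A) (t div 2) *v x"
    have "C *v ?y = 0" and "(mconj C ** A) *v ?y = 0"
      using out vstack_mult_vec_eq_0_iff by blast+
    then show ?thesis
      by (cases "even t") (simp_all add: funpow_antilin_map_div2 vconj_antilin_map
          matrix_vector_mul_assoc matrix_mul_assoc flip: vconj_mult)
  qed
  then have "circ_rep 0 C *v ((\<lambda>v. circ_rep 0 A *v v) ^^ t) (re_im_vec x) = 0" for t
    by (simp add: funpow_circ_rep circ_rep_mult_re_im_vec)
  then have "re_im_vec x = 0"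
    using assms unfolding antilinear_observable_def observable_def by blast
  then show "x = 0" by simp
qed

definition antilin_congr :: "complex^'n^'n \<Rightarrow> complex^'n^'n \<Rightarrow> complex^'n^'n" where
  "antilin_congr A X = mH A ** mconj X ** A"

lemma antilin_congr_add: "antilin_congr A (X + Y) = antilin_congr A X + antilin_congr A Y"
  by (simp add: antilin_congr_def mconj_add matrix_add_ldistrib matrix_add_rdistrib)

lemma antilin_congr_diff: "antilin_congr A (X - Y) = antilin_congr A X - antilin_congr A Y"
  by (simp add: antilin_congr_def mconj_diff matrix_diff_ldistrib matrix_diff_rdistrib)

lemma antilin_congr_uminus: "antilin_congr A (- X) = - antilin_congr A X"
  using antilin_congr_diff[of A 0 X] by (simp add: antilin_congr_def)

lemma antilin_congr_twice:
  "antilin_congr A (antilin_congr A X) = mH (mconj A ** A) ** X ** (mconj A ** A)"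
  by (simp add: antilin_congr_def mconj_mult mH_mult mconj_mH matrix_mul_assoc)

lemma antilin_congr_gram: "antilin_congr A (mH C ** C) = mH (mconj C ** A) ** (mconj C ** A)"
  by (simp add: antilin_congr_def mconj_mult mH_mult mconj_mH matrix_mul_assoc)

lemma antilin_lyapunov_imp_lyapunov_square:
  assumes "mH A ** mconj P ** A - P = - (mH C ** C)"
  shows "mH (mconj A ** A) ** P ** (mconj A ** A) - P =
    - (mH (vstack C (mconj C ** A)) ** vstack C (mconj C ** A))"
proof -
  have "antilin_congr A P = P - mH C ** C"
    using assms by (simp add: antilin_congr_def diff_eq_eq)
  then have "antilin_congr A (antilin_congr A P) = P - mH C ** C - antilin_congr A (mH C ** C)"
    by (simp add: antilin_congr_diff)
  then show ?thesis
    by (simp add: antilin_congr_twice antilin_congr_gram vstack_gram)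
qed

lemma lyapunov_square_imp_antilin_lyapunov:
  assumes st: "schur_stable (mconj A ** A)"
    and eq: "mH (mconj A ** A) ** P ** (mconj A ** A) - P =
      - (mH (vstack C (mconj C ** A)) ** vstack C (mconj C ** A))"
  shows "mH A ** mconj P ** A - P = - (mH C ** C)"
proof -
  let ?T = "antilin_congr A" and ?Q = "mH C ** C"
  define R where "R = ?T P - P + ?Q"
  have "?T (?T P) = P - ?Q - ?T ?Q"
    using eq by (simp add: antilin_congr_twice antilin_congr_gram vstack_gram diff_eq_eq)
  then have "?T R = - R"
    by (simp add: R_def antilin_congr_add antilin_congr_diff)
  then have "?T (?T R) = R"
    by (simp add: antilin_congr_uminus)
  then have "R = 0"
    unfolding antilin_congr_twice by (rule schur_stable_congruence_fixpoint[OF st])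
  then show ?thesis
    by (simp add: R_def antilin_congr_def algebra_simps eq_neg_iff_add_eq_0)
qed

theorem corollary5:
  fixes A2 :: "complex^'n^'n" and C2 :: "complex^'n^'p" and CN :: "complex^'n^'q"
  assumes obs2: "antilinear_observable A2 C2"
    and obsN: "observable (mconj A2 ** A2) CN"
  shows "(asymptotically_stable (antilin_map A2) \<longleftrightarrow>
           (\<exists>!P1. posdef P1 \<and> mH A2 ** mconj P1 ** A2 - P1 = - (mH C2 ** C2))) \<and>
         ((\<exists>!P1. posdef P1 \<and> mH A2 ** mconj P1 ** A2 - P1 = - (mH C2 ** C2)) \<longleftrightarrow>
           (\<exists>!PN. posdef PN \<and>
              mH (mconj A2 ** A2) ** PN ** (mconj A2 ** A2) - PN = - (mH CN ** CN))) \<and>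
         (asymptotically_stable (antilin_map A2) \<longrightarrow>
           (\<forall>P1. (mH A2 ** mconj P1 ** A2 - P1 = - (mH C2 ** C2)) \<longleftrightarrow>
              (let C = vstack C2 (mconj C2 ** A2) in
                 mH (mconj A2 ** A2) ** P1 ** (mconj A2 ** A2) - P1 = - (mH C ** C))))"
proof -
  let ?M = "mconj A2 ** A2" and ?C = "vstack C2 (mconj C2 ** A2)"
  let ?E1 = "\<lambda>P. mH A2 ** mconj P ** A2 - P = - (mH C2 ** C2)"
  let ?E2 = "\<lambda>P. mH ?M ** P ** ?M - P = - (mH ?C ** ?C)"
  have obs: "observable ?M ?C"
    by (rule antilinear_observable_imp_observable_square[OF obs2])
  have E1_iff_E2: "?E1 P \<longleftrightarrow> ?E2 P" if "schur_stable ?M" for P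
    using antilin_lyapunov_imp_lyapunov_square lyapunov_square_imp_antilin_lyapunov[OF that] by blast
  have unique1: "(\<exists>!P. posdef P \<and> ?E1 P) \<longleftrightarrow> schur_stable ?M"
  proof
    assume "\<exists>!P. posdef P \<and> ?E1 P"
    then obtain P where "posdef P" and "?E1 P"
      by blast
    then show "schur_stable ?M"
      by (intro posdef_lyapunov_imp_schur_stable[OF _ antilin_lyapunov_imp_lyapunov_square obs])
  next
    assume st: "schur_stable ?M"
    then have "\<exists>!P. posdef P \<and> ?E2 P"
      using lyapunov_unique_posdef_iff_schur_stable[OF obs] by simp
    then show "\<exists>!P. posdef P \<and> ?E1 P"
      using E1_iff_E2[OF st] by simp
  qed
  have uniqueN:
    "(\<exists>!P. posdef P \<and> mH ?M ** P ** ?M - P = - (mH CN ** CN)) \<longleftrightarrow> schur_stable ?M"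
    by (rule lyapunov_unique_posdef_iff_schur_stable[OF obsN])
  show ?thesis
    unfolding Let_def asymptotically_stable_antilin_map_iff unique1 uniqueN
    using E1_iff_E2 by simp
qed

end
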